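(* Let $G=\mathrm{SL}(2,\mathbb{C})$. For $i=1,2,3$ let $\mathbf{a}_i\in G$ with $\mathrm{tr}(\mathbf{a}_i)=t_i$, put $\overline{\mathbf{a}}_i=\mathbf{a}_i-(t_i/2)\mathbf{e}$ and $s_{ij}=\mathrm{tr}(\overline{\mathbf{a}}_i\overline{\mathbf{a}}_j)$, and let $S=(s_{ij})_{i,j=1}^3$. (i) The matrices $\overline{\mathbf{a}}_1,\overline{\mathbf{a}}_2,\overline{\mathbf{a}}_3$ are linearly independent (over $\mathbb{C}$) if and only if $\det(S)\neq 0$. (ii) Suppose $\det(S)\neq0$. Let $s_{14},s_{24},s_{34},t_4\in\mathbb{C}$ be given, and set $s_{44}=\tfrac12 t_4^2-2$ and $s_{4i}=s_{i4}$ for $i=1,2,3$. Then there exists $\mathbf{a}_4\in G$ with $\mathrm{tr}(\mathbf{a}_4)=t_4$ and $\mathrm{tr}(\overline{\mathbf{a}}_i\overline{\mathbf{a}}_4)=s_{i4}$ for $1\le i\le 3$, where $\overline{\mathbf{a}}_4=\mathbf{a}_4-(t_4/2)\mathbf{e}$, if and only if $\det\big((s_{ij})_{i,j=1}^4\big)=0$.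
   Context: $\mathbf{e}$ denotes the $2\times2$ identity matrix. *)

theory Defs
  imports "HOL-Analysis.Analysis"
begin

type_synonym mat2 = "complex^2^2"

definition mtrace :: "mat2 \<Rightarrow> complex" where
  "mtrace A = A$1$1 + A$2$2"

definition in_SL2 :: "mat2 \<Rightarrow> bool" where
  "in_SL2 A \<longleftrightarrow> det A = 1"

definition cscale :: "complex \<Rightarrow> mat2 \<Rightarrow> mat2" where
  "cscale c A = (\<chi> i j. c * A$i$j)"

definition bar :: "mat2 \<Rightarrow> mat2" where
  "bar A = A - cscale (mtrace A / 2) (mat 1)"

definition lin_indep3 :: "(3 \<Rightarrow> mat2) \<Rightarrow> bool" where
  "lin_indep3 v \<longleftrightarrow>
     (\<forall>c :: 3 \<Rightarrow> complex. (\<Sum>i\<in>UNIV. cscale (c i) (v i)) = 0 \<longrightarrow> (\<forall>i. c i = 0))"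

text \<open>Embedding of the indices 1,2,3 of the 4-element index type into the 3-element index type
  (index 4 of the 4-element type, i.e. the numeral 4 = 0, is the new index).\<close>
definition emb43 :: "4 \<Rightarrow> 3" where
  "emb43 i = (if i = 1 then 1 else if i = 2 then 2 else 3)"

definition Smat3 :: "(3 \<Rightarrow> mat2) \<Rightarrow> complex^3^3" where
  "Smat3 a = (\<chi> i j. mtrace (bar (a i) ** bar (a j)))"

definition Smat4 :: "(3 \<Rightarrow> mat2) \<Rightarrow> (3 \<Rightarrow> complex) \<Rightarrow> complex \<Rightarrow> complex^4^4" where
  "Smat4 a s4 t4 = (\<chi> i j.
      if i \<noteq> 4 \<and> j \<noteq> 4 then mtrace (bar (a (emb43 i)) ** bar (a (emb43 j)))
      else if i \<noteq> 4 then s4 (emb43 i)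
      else if j \<noteq> 4 then s4 (emb43 j)
      else t4^2 / 2 - 2)"

end

theory Submission
  imports Defs
begin

text \<open>Writing \<open>bar A = [[x, y], [z, -x]]\<close>, the coordinates \<open>(x, y, z)\<close> identify the traceless
  parts with \<open>\<complex>\<^sup>3\<close>, and \<open>tr (bar A * bar B)\<close> becomes the symmetric bilinear form
  \<open>B(u, v) = 2 u\<^sub>1 v\<^sub>1 + u\<^sub>2 v\<^sub>3 + u\<^sub>3 v\<^sub>2\<close>, whose Gram matrix \<open>Q\<close> has determinant \<open>-2\<close>.
  Hence \<open>S = M\<^sup>T Q M\<close> for the matrix \<open>M\<close> whose columns \<open>u\<^sub>i\<close> are the coordinates of the \<open>bar a\<^sub>i\<close>,
  so \<open>det S = -2 (det M)\<^sup>2\<close>, which gives (i).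
  For (ii), when \<open>det M \<noteq> 0\<close> the equations \<open>B(u\<^sub>i, w) = s\<^sub>i\<^sub>4\<close> have a solution \<open>w\<close>, and the bordered
  matrix factors as \<open>P\<^sup>T (Q \<oplus> (s\<^sub>4\<^sub>4 - B(w, w))) P\<close> with \<open>det P = det M\<close>, so its determinant is
  \<open>det S \<cdot> (s\<^sub>4\<^sub>4 - B(w, w))\<close>. On the other hand a matrix with trace \<open>t\<close> and traceless coordinates
  \<open>w\<close> has determinant \<open>t\<^sup>2/4 - B(w, w)/2\<close>, so it lies in \<open>SL(2, \<complex>)\<close> exactly when
  \<open>B(w, w) = t\<^sup>2/2 - 2 = s\<^sub>4\<^sub>4\<close>. Neither part uses that the \<open>a\<^sub>i\<close> themselves lie in
  \<open>SL(2, \<complex>)\<close>.\<close>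

lemma det_4:
  "det (A::'a::comm_ring_1^4^4) =
      A$1$1*A$2$2*A$3$3*A$4$4 - A$1$1*A$2$2*A$3$4*A$4$3 - A$1$1*A$2$3*A$3$2*A$4$4
    + A$1$1*A$2$3*A$3$4*A$4$2 + A$1$1*A$2$4*A$3$2*A$4$3 - A$1$1*A$2$4*A$3$3*A$4$2
    - A$1$2*A$2$1*A$3$3*A$4$4 + A$1$2*A$2$1*A$3$4*A$4$3 + A$1$2*A$2$3*A$3$1*A$4$4
    - A$1$2*A$2$3*A$3$4*A$4$1 - A$1$2*A$2$4*A$3$1*A$4$3 + A$1$2*A$2$4*A$3$3*A$4$1
    + A$1$3*A$2$1*A$3$2*A$4$4 - A$1$3*A$2$1*A$3$4*A$4$2 - A$1$3*A$2$2*A$3$1*A$4$4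
    + A$1$3*A$2$2*A$3$4*A$4$1 + A$1$3*A$2$4*A$3$1*A$4$2 - A$1$3*A$2$4*A$3$2*A$4$1
    - A$1$4*A$2$1*A$3$2*A$4$3 + A$1$4*A$2$1*A$3$3*A$4$2 + A$1$4*A$2$2*A$3$1*A$4$3
    - A$1$4*A$2$2*A$3$3*A$4$1 - A$1$4*A$2$3*A$3$1*A$4$2 + A$1$4*A$2$3*A$3$2*A$4$1"
proof -
  have f1: "finite {2::4, 3, 4}" "1 \<notin> {2::4, 3, 4}" by auto
  have f2: "finite {3::4, 4}" "2 \<notin> {3::4, 4}" by auto
  have f3: "finite {4::4}" "3 \<notin> {4::4}" by auto
  show ?thesis
    unfolding det_def UNIV_4 sum_over_permutations_insert[OF f1]
      sum_over_permutations_insert[OF f2] sum_over_permutations_insert[OF f3] permutes_sing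
    by (simp add: sign_swap_id permutation_swap_id permutation_compose sign_compose sign_id
        swap_id_eq algebra_simps)
qed

definition traceless_coords :: "mat2 \<Rightarrow> complex^3" where
  "traceless_coords A = vector [(A$1$1 - A$2$2) / 2, A$1$2, A$2$1]"

definition trace_form :: "complex^3 \<Rightarrow> complex^3 \<Rightarrow> complex" where
  "trace_form u v = 2 * u$1 * v$1 + u$2 * v$3 + u$3 * v$2"

definition trace_form_gram :: "complex^3^3" where
  "trace_form_gram = vector [vector [2, 0, 0], vector [0, 0, 1], vector [0, 1, 0]]"

definition coords_matrix :: "(3 \<Rightarrow> mat2) \<Rightarrow> complex^3^3" where
  "coords_matrix a = (\<chi> r i. traceless_coords (a i) $ r)"

lemma traceless_coords_component [simp]:
  "traceless_coords A $ 1 = (A$1$1 - A$2$2) / 2"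
  "traceless_coords A $ 2 = A$1$2"
  "traceless_coords A $ 3 = A$2$1"
  by (simp_all add: traceless_coords_def)

lemma trace_form_gram_component [simp]:
  "trace_form_gram$1$1 = 2" "trace_form_gram$1$2 = 0" "trace_form_gram$1$3 = 0"
  "trace_form_gram$2$1 = 0" "trace_form_gram$2$2 = 0" "trace_form_gram$2$3 = 1"
  "trace_form_gram$3$1 = 0" "trace_form_gram$3$2 = 1" "trace_form_gram$3$3 = 0"
  by (simp_all add: trace_form_gram_def)

lemma bar_component [simp]:
  "bar A $ 1 $ 1 = (A$1$1 - A$2$2) / 2" "bar A $ 2 $ 2 = - (A$1$1 - A$2$2) / 2"
  "bar A $ 1 $ 2 = A$1$2" "bar A $ 2 $ 1 = A$2$1"
  by (simp_all add: bar_def cscale_def mtrace_def mat_def field_simps)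

lemma mtrace_bar_mult: "mtrace (bar A ** bar B) = trace_form (traceless_coords A) (traceless_coords B)"
  by (simp add: mtrace_def matrix_matrix_mult_def sum_2 trace_form_def field_simps)

lemma trace_form_traceless_coords_self:
  "trace_form (traceless_coords A) (traceless_coords A) = (mtrace A)\<^sup>2 / 2 - 2 * det A"
  by (simp add: det_2 trace_form_def mtrace_def field_simps power2_eq_square)

lemma det_trace_form_gram: "det trace_form_gram = -2"
  by (simp add: det_3)

lemma gram_coords_matrix_component:
  "(transpose (coords_matrix a) ** trace_form_gram ** coords_matrix a) $ i $ j
     = trace_form (traceless_coords (a i)) (traceless_coords (a j))"
  by (simp add: matrix_matrix_mult_def sum_3 transpose_def coords_matrix_def trace_form_def
      algebra_simps)

lemma Smat3_eq_gram: "Smat3 a = transpose (coords_matrix a) ** trace_form_gram ** coords_matrix a"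
  by (simp add: vec_eq_iff gram_coords_matrix_component Smat3_def mtrace_bar_mult)

lemma det_Smat3: "det (Smat3 a) = -2 * (det (coords_matrix a))\<^sup>2"
  by (simp add: Smat3_eq_gram det_mul det_trace_form_gram power2_eq_square)
lemma sum_cscale_bar_eq_0_iff:
  "(\<Sum>i\<in>UNIV. cscale (c i) (bar (a i))) = 0 \<longleftrightarrow> coords_matrix a *v (\<chi> i. c i) = 0"
proof -
  let ?X = "\<Sum>i\<in>UNIV. cscale (c i) (bar (a i))"
  let ?y = "coords_matrix a *v (\<chi> i. c i)"
  have "?X $ p $ q = (\<Sum>i\<in>UNIV. c i * bar (a i) $ p $ q)" for p q
    by (simp add: sum_component cscale_def)
  then have "?X$1$1 = ?y$1" "?X$2$2 = - ?y$1" "?X$1$2 = ?y$2" "?X$2$1 = ?y$3"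
    by (simp_all add: sum_3 matrix_vector_mult_def coords_matrix_def field_simps)
  then show ?thesis
    by (simp only: vec_eq_iff forall_2 forall_3 zero_index) auto
qed

lemma lin_indep3_bar_iff_det_coords_matrix:
  "lin_indep3 (\<lambda>i. bar (a i)) \<longleftrightarrow> det (coords_matrix a) \<noteq> 0"
proof -
  have "lin_indep3 (\<lambda>i. bar (a i)) \<longleftrightarrow> (\<forall>x. coords_matrix a *v x = 0 \<longrightarrow> x = 0)"
    unfolding lin_indep3_def sum_cscale_bar_eq_0_iff
    by (metis (no_types, lifting) vec_eq_iff vec_lambda_beta vec_lambda_eta zero_index)
  also have "\<dots> \<longleftrightarrow> det (coords_matrix a) \<noteq> 0"
    by (simp add: matrix_left_invertible_ker[symmetric] invertible_left_inverse[symmetric]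
        invertible_det_nz)
  finally show ?thesis .
qed

lemma lin_indep3_bar_iff_det_Smat3: "lin_indep3 (\<lambda>i. bar (a i)) \<longleftrightarrow> det (Smat3 a) \<noteq> 0"
  by (simp add: lin_indep3_bar_iff_det_coords_matrix det_Smat3)

definition matrix_of_coords :: "complex^3 \<Rightarrow> complex \<Rightarrow> mat2" where
  "matrix_of_coords w t = vector [vector [w$1 + t/2, w$2], vector [w$3, - w$1 + t/2]]"

lemma matrix_of_coords_component [simp]:
  "matrix_of_coords w t $ 1 $ 1 = w$1 + t/2" "matrix_of_coords w t $ 1 $ 2 = w$2"
  "matrix_of_coords w t $ 2 $ 1 = w$3" "matrix_of_coords w t $ 2 $ 2 = - w$1 + t/2"
  by (simp_all add: matrix_of_coords_def)

lemma ex_SL2_with_trace_and_coords_iff: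
  "(\<exists>A. in_SL2 A \<and> mtrace A = t \<and> traceless_coords A = w) \<longleftrightarrow> trace_form w w = t\<^sup>2 / 2 - 2"
proof
  assume "\<exists>A. in_SL2 A \<and> mtrace A = t \<and> traceless_coords A = w"
  then show "trace_form w w = t\<^sup>2 / 2 - 2"
    using trace_form_traceless_coords_self by (auto simp: in_SL2_def)
next
  assume "trace_form w w = t\<^sup>2 / 2 - 2"
  then have "in_SL2 (matrix_of_coords w t)"
    by (simp add: in_SL2_def det_2 trace_form_def field_simps power2_eq_square)
  moreover have "mtrace (matrix_of_coords w t) = t" "traceless_coords (matrix_of_coords w t) = w"
    by (simp_all add: mtrace_def vec_eq_iff forall_3)
  ultimately show "\<exists>A. in_SL2 A \<and> mtrace A = t \<and> traceless_coords A = w"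
    by blast
qed
definition coords_matrix_bordered :: "(3 \<Rightarrow> mat2) \<Rightarrow> complex^3 \<Rightarrow> complex^4^4" where
  "coords_matrix_bordered a w = (\<chi> r j.
     if r = 4 then (if j = 4 then 1 else 0)
     else if j = 4 then w $ emb43 r else coords_matrix a $ emb43 r $ emb43 j)"

definition trace_form_gram_bordered :: "complex \<Rightarrow> complex^4^4" where
  "trace_form_gram_bordered d = (\<chi> r k.
     if r = 4 \<or> k = 4 then (if r = 4 \<and> k = 4 then d else 0)
     else trace_form_gram $ emb43 r $ emb43 k)"

lemma emb43_simps [simp]: "emb43 1 = 1" "emb43 2 = 2" "emb43 3 = 3"
  by (simp_all add: emb43_def)

lemma det_coords_matrix_bordered: "det (coords_matrix_bordered a w) = det (coords_matrix a)"
  by (simp add: det_4 det_3 coords_matrix_bordered_def algebra_simps)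

lemma det_trace_form_gram_bordered: "det (trace_form_gram_bordered d) = -2 * d"
  by (simp add: det_4 trace_form_gram_bordered_def)

lemma Smat4_eq_gram_bordered:
  assumes "\<And>i. trace_form (traceless_coords (a i)) w = s4 i"
  shows "Smat4 a s4 t4 = transpose (coords_matrix_bordered a w)
           ** trace_form_gram_bordered (t4\<^sup>2 / 2 - 2 - trace_form w w) ** coords_matrix_bordered a w"
  unfolding vec_eq_iff forall_4 Smat4_def mtrace_bar_mult
  by (simp add: matrix_matrix_mult_def sum_4 sum_3 transpose_def coords_matrix_bordered_def
      trace_form_gram_bordered_def coords_matrix_def assms[symmetric] trace_form_def field_simps)

lemma det_Smat4:
  assumes "\<And>i. trace_form (traceless_coords (a i)) w = s4 i"
  shows "det (Smat4 a s4 t4) = det (Smat3 a) * (t4\<^sup>2 / 2 - 2 - trace_form w w)"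
  by (simp add: Smat4_eq_gram_bordered[OF assms] det_mul det_coords_matrix_bordered
      det_trace_form_gram_bordered det_Smat3 power2_eq_square field_simps)

lemma ex_trace_form_solution:
  assumes "det (Smat3 a) \<noteq> 0"
  obtains w where "\<And>i. trace_form (traceless_coords (a i)) w = s i"
proof -
  let ?A = "transpose (coords_matrix a) ** trace_form_gram"
  have "det ?A \<noteq> 0"
    using assms by (simp add: det_Smat3 det_mul det_trace_form_gram)
  then obtain w where "?A *v w = (\<chi> i. s i)"
    using cramer by blast
  moreover have "(?A *v w) $ i = trace_form (traceless_coords (a i)) w" for i
    by (simp add: matrix_vector_mult_def matrix_matrix_mult_def sum_3 transpose_def
        coords_matrix_def trace_form_def algebra_simps)
  ultimately show ?thesis
    using that by (metis vec_lambda_beta)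
qed

lemma ex_SL2_with_trace_products_iff_det_Smat4:
  assumes "det (Smat3 a) \<noteq> 0"
  shows "(\<exists>a4. in_SL2 a4 \<and> mtrace a4 = t4 \<and> (\<forall>i. mtrace (bar (a i) ** bar a4) = s4 i))
           \<longleftrightarrow> det (Smat4 a s4 t4) = 0"
proof
  assume "\<exists>a4. in_SL2 a4 \<and> mtrace a4 = t4 \<and> (\<forall>i. mtrace (bar (a i) ** bar a4) = s4 i)"
  then obtain a4 where "in_SL2 a4" "mtrace a4 = t4"
    and products: "\<And>i. trace_form (traceless_coords (a i)) (traceless_coords a4) = s4 i"
    by (auto simp: mtrace_bar_mult)
  then have "trace_form (traceless_coords a4) (traceless_coords a4) = t4\<^sup>2 / 2 - 2"
    using ex_SL2_with_trace_and_coords_iff by blast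
  then show "det (Smat4 a s4 t4) = 0"
    using det_Smat4[OF products] by simp
next
  assume det_Smat4_0: "det (Smat4 a s4 t4) = 0"
  obtain w where w: "\<And>i. trace_form (traceless_coords (a i)) w = s4 i"
    using ex_trace_form_solution[OF assms] by blast
  then have "trace_form w w = t4\<^sup>2 / 2 - 2"
    using det_Smat4 det_Smat4_0 assms by fastforce
  then obtain a4 where "in_SL2 a4" "mtrace a4 = t4" "traceless_coords a4 = w"
    using ex_SL2_with_trace_and_coords_iff by blast
  then show "\<exists>a4. in_SL2 a4 \<and> mtrace a4 = t4 \<and> (\<forall>i. mtrace (bar (a i) ** bar a4) = s4 i)"
    using w by (auto simp: mtrace_bar_mult)
qed

theorem mainTheorem1:
  fixes a :: "3 \<Rightarrow> mat2"
  assumes "\<And>i. in_SL2 (a i)"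
  shows "(lin_indep3 (\<lambda>i. bar (a i)) \<longleftrightarrow> det (Smat3 a) \<noteq> 0)
       \<and> (det (Smat3 a) \<noteq> 0 \<longrightarrow>
          (\<forall>(s4 :: 3 \<Rightarrow> complex) (t4 :: complex).
             (\<exists>a4. in_SL2 a4 \<and> mtrace a4 = t4 \<and>
                   (\<forall>i. mtrace (bar (a i) ** bar a4) = s4 i))
             \<longleftrightarrow> det (Smat4 a s4 t4) = 0))"
  using lin_indep3_bar_iff_det_Smat3 ex_SL2_with_trace_products_iff_det_Smat4 by blast

end
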